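(* As formal power series in $q$ (equivalently, for $|q|<1$), \[ \frac{f_6^8f_1}{f_3^4f_2^2}+\frac{f_2f_3^2f_{12}^3}{f_1f_4f_6} = 2\,\frac{f_4^2f_{12}^2f_6}{f_2f_3}. \]
   Context: For $m\in\mathbb{N}$ and $|q|<1$, $f_m:=\prod_{n\geq 1}(1-q^{mn})$. *)

theory Defs
  imports "HOL-Analysis.Analysis"
begin

definition f :: "nat \<Rightarrow> complex \<Rightarrow> complex" where
  "f m q = (\<Prod>n. (1 - q ^ (m * Suc n)))"

end

theory Submission
  imports Defs
begin

text \<open>With \<open>\<theta>(x; p) = \<Sum>\<^bsub>m\<in>\<int>\<^esub> (-x)\<^sup>m p\<^bsup>m(m-1)/2\<^esup>\<close>, the Jacobi triple
  product \<open>\<theta>(x; p) = (x; p)\<^sub>\<infinity> (p/x; p)\<^sub>\<infinity> (p; p)\<^sub>\<infinity>\<close>, together with splitting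
  products by residue classes, turns \<open>\<theta>(\<plusminus>q; q\<^sup>6)\<close>, \<open>\<theta>(\<plusminus>q\<^sup>3; q\<^sup>6)\<close> and
  \<open>\<theta>(q\<^sup>4; q\<^sup>12)\<close> into eta quotients. After division by \<open>f\<^sub>6 f\<^sub>1\<^sub>2\<^sup>2 / (f\<^sub>2 f\<^sub>3)\<close>
  the identity becomes
  \<open>\<theta>(q; q\<^sup>6) \<theta>(-q\<^sup>3; q\<^sup>6) + \<theta>(-q; q\<^sup>6) \<theta>(q\<^sup>3; q\<^sup>6) = 2 \<theta>(q\<^sup>4; q\<^sup>12)\<^sup>2\<close>,
  the case \<open>x = q\<close>, \<open>y = -q\<^sup>3\<close>, \<open>p = q\<^sup>6\<close> of Ramanujan's
  \<open>\<theta>(x; p) \<theta>(y; p) + \<theta>(-x; p) \<theta>(-y; p) = 2 \<theta>(-xy; p\<^sup>2) \<theta>(-px/y; p\<^sup>2)\<close>.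
  The triple product itself is the limit of Cauchy's finite q-binomial theorem.\<close>

section \<open>Infinite q-Pochhammer products\<close>

lemma convergent_prod_one_plus_geometric:
  fixes q c :: complex
  assumes "norm q < 1"
  shows "convergent_prod (\<lambda>n. 1 + c * q^n)"
proof -
  have "summable (\<lambda>n. norm ((1 + c * q^n) - 1))"
    using assms by (simp add: norm_mult norm_power summable_mult summable_geometric)
  then show ?thesis
    by (intro abs_convergent_prod_imp_convergent_prod summable_imp_abs_convergent_prod)
qed

lemma convergent_prod_one_plus_power_arith:
  fixes q c :: complex
  assumes "norm q < 1" "d > 0"
  shows "convergent_prod (\<lambda>n. 1 + c * q^(a + d*n))"
proof -
  have "norm (q^d) < 1"
    using assms by (simp add: norm_power power_less_one_iff)
  then have "convergent_prod (\<lambda>n. 1 + (c * q^a) * (q^d)^n)"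
    by (rule convergent_prod_one_plus_geometric)
  then show ?thesis
    by (simp add: power_add power_mult mult.assoc)
qed

definition qpoch :: "complex \<Rightarrow> nat \<Rightarrow> nat \<Rightarrow> complex" where
  "qpoch q a d = (\<Prod>n. 1 - q^(a + d*n))"

lemma convergent_prod_qpoch:
  fixes q :: complex
  assumes "norm q < 1" "d > 0"
  shows "convergent_prod (\<lambda>n. 1 - q^(a + d*n))"
  using convergent_prod_one_plus_power_arith[OF assms, of "-1"] by simp

lemma qpoch_nonzero:
  assumes "norm q < 1" "d > 0" "a > 0"
  shows "qpoch q a d \<noteq> 0"
  unfolding qpoch_def
proof (rule prodinf_nonzero[OF convergent_prod_qpoch[OF assms(1,2)]])
  fix n
  have "norm (q^(a + d*n)) < 1"
    using assms by (simp add: norm_power power_less_one_iff)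
  then show "1 - q^(a + d*n) \<noteq> 0"
    by auto
qed

lemma f_eq_qpoch: "f m q = qpoch q m m"
  unfolding f_def qpoch_def by (simp add: algebra_simps)

lemma f_power: "f m (q^k) = f (m*k) q"
  unfolding f_def by (simp add: power_mult[symmetric] algebra_simps)

lemma f_at_0: "m > 0 \<Longrightarrow> f m 0 = 1"
  unfolding f_def by (simp add: power_0_left)

lemma prodinf_split_residues:
  fixes g :: "nat \<Rightarrow> 'a::{real_normed_field, banach}"
  assumes "convergent_prod g" "k > 0"
    and "\<And>r. r < k \<Longrightarrow> convergent_prod (\<lambda>n. g (k*n + r))"
  shows "prodinf g = (\<Prod>r<k. \<Prod>n. g (k*n + r))"
proof -
  have partial: "(\<Prod>i<N*k. g i) = (\<Prod>r<k. \<Prod>n<N. g (k*n + r))" for N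
  proof -
    have "(\<Prod>i\<in>{n*k..<n*k + k}. g i) = (\<Prod>r<k. g (k*n + r))" for n
      using prod.shift_bounds_nat_ivl[of g 0 "n*k" k] by (simp add: atLeast0LessThan algebra_simps)
    then have "(\<Prod>i<N*k. g i) = (\<Prod>n<N. \<Prod>r<k. g (k*n + r))"
      by (simp flip: prod.nat_group)
    then show ?thesis
      by (simp add: prod.swap[of _ "{..<N}"])
  qed
  have "(\<lambda>N. \<Prod>i<N. g i) \<longlonglongrightarrow> prodinf g"
    using assms(1) by (intro has_prod_imp_tendsto' convergent_prod_has_prod)
  then have "(\<lambda>N. \<Prod>i<N*k. g i) \<longlonglongrightarrow> prodinf g"
    using LIMSEQ_subseq_LIMSEQ[of _ _ "\<lambda>N. N*k"] assms(2) by (auto simp: strict_mono_def o_def)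
  moreover have "(\<lambda>N. \<Prod>r<k. \<Prod>n<N. g (k*n + r)) \<longlonglongrightarrow> (\<Prod>r<k. \<Prod>n. g (k*n + r))"
    using assms(3) by (intro tendsto_prod has_prod_imp_tendsto' convergent_prod_has_prod) auto
  ultimately show ?thesis
    unfolding partial by (rule LIMSEQ_unique)
qed

lemma qpoch_split_residues:
  assumes "norm q < 1" "d > 0" "k > 0"
  shows "qpoch q a d = (\<Prod>r<k. qpoch q (a + r*d) (k*d))"
proof -
  have "qpoch q a d = (\<Prod>r<k. \<Prod>n. 1 - q^(a + d*(k*n + r)))"
    unfolding qpoch_def
  proof (rule prodinf_split_residues)
    fix r
    have "convergent_prod (\<lambda>n. 1 - q^((a + d*r) + (d*k)*n))"
      using assms by (intro convergent_prod_qpoch) auto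
    then show "convergent_prod (\<lambda>n. 1 - q^(a + d*(k*n + r)))"
      by (simp add: algebra_simps)
  qed (use assms convergent_prod_qpoch in auto)
  then show ?thesis
    unfolding qpoch_def by (simp add: algebra_simps)
qed

lemma prodinf_one_plus_power_arith:
  assumes "norm q < 1" "d > 0" "a > 0"
  shows "(\<Prod>n. 1 + q^(a + d*n)) = qpoch q (2*a) (2*d) / qpoch q a d"
proof -
  have "(\<Prod>n. 1 + q^(a + d*n)) * qpoch q a d = (\<Prod>n. (1 + q^(a + d*n)) * (1 - q^(a + d*n)))"
    unfolding qpoch_def using assms
    by (intro prodinf_mult convergent_prod_qpoch
        convergent_prod_one_plus_power_arith[of q d 1, simplified])
  also have "\<dots> = qpoch q (2*a) (2*d)"
    unfolding qpoch_def
    by (simp add: algebra_simps power_mult_distrib power_add flip: power_mult power2_eq_square)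
  finally show ?thesis
    using qpoch_nonzero[OF assms] by (simp add: field_simps)
qed

section \<open>Gaussian binomial coefficients\<close>

fun gauss_binom :: "'a::comm_ring_1 \<Rightarrow> nat \<Rightarrow> nat \<Rightarrow> 'a" where
  "gauss_binom p 0 k = (if k = 0 then 1 else 0)"
| "gauss_binom p (Suc N) 0 = 1"
| "gauss_binom p (Suc N) (Suc k) = gauss_binom p N (Suc k) + p^(N - k) * gauss_binom p N k"

lemma gauss_binom_eq_0: "N < k \<Longrightarrow> gauss_binom p N k = 0"
  by (induction p N k rule: gauss_binom.induct) auto

lemma gauss_binom_0_right [simp]: "gauss_binom p N 0 = 1"
  by (cases N) auto

definition qpoch_fin :: "'a::comm_ring_1 \<Rightarrow> nat \<Rightarrow> 'a" where
  "qpoch_fin p n = (\<Prod>i<n. 1 - p^Suc i)"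

lemma qpoch_fin_Suc: "qpoch_fin p (Suc n) = qpoch_fin p n * (1 - p^Suc n)"
  by (simp add: qpoch_fin_def)

lemma gauss_binom_mult_qpoch_fin:
  "k \<le> N \<Longrightarrow> gauss_binom p N k * qpoch_fin p k * qpoch_fin p (N - k) = qpoch_fin p N"
proof (induction N arbitrary: k)
  case 0
  then show ?case by (simp add: qpoch_fin_def)
next
  case (Suc N)
  show ?case
  proof (cases k)
    case 0
    then show ?thesis by (simp add: qpoch_fin_def)
  next
    case (Suc j)
    with Suc.prems have j: "j \<le> N" by simp
    have upper: "gauss_binom p N (Suc j) * qpoch_fin p (Suc j) * qpoch_fin p (N - j)
        = qpoch_fin p N * (1 - p^(N - j))"
    proof (cases "j = N")
      case False
      with j have "Suc j \<le> N" by simp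
      then have "qpoch_fin p (N - j) = qpoch_fin p (N - Suc j) * (1 - p^(N - j))"
        using qpoch_fin_Suc[of p "N - Suc j"] by (simp add: Suc_diff_Suc)
      then show ?thesis
        using Suc.IH[OF \<open>Suc j \<le> N\<close>] by (simp flip: mult.assoc)
    qed (simp add: gauss_binom_eq_0)
    have lower: "gauss_binom p N j * qpoch_fin p (Suc j) * qpoch_fin p (N - j)
        = qpoch_fin p N * (1 - p^Suc j)"
      using Suc.IH[OF j] by (simp add: qpoch_fin_Suc algebra_simps)
    have "gauss_binom p (Suc N) k * qpoch_fin p k * qpoch_fin p (Suc N - k)
        = gauss_binom p N (Suc j) * qpoch_fin p (Suc j) * qpoch_fin p (N - j)
          + p^(N - j) * (gauss_binom p N j * qpoch_fin p (Suc j) * qpoch_fin p (N - j))"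
      using Suc by (simp add: algebra_simps)
    also have "\<dots> = qpoch_fin p N * (1 - p^(N - j) * p^Suc j)"
      unfolding upper lower by (simp add: algebra_simps)
    also have "p^(N - j) * p^Suc j = p^Suc N"
      using j by (simp flip: power_add del: power_Suc)
    finally show ?thesis
      by (simp add: qpoch_fin_Suc)
  qed
qed

lemma q_binomial_theorem:
  fixes z p :: "'a::comm_ring_1"
  shows "(\<Prod>i<N. 1 + z * p^i) = (\<Sum>k\<le>N. gauss_binom p N k * p^(k*(k - 1) div 2) * z^k)"
proof (induction N)
  case 0
  then show ?case by simp
next
  case (Suc N)
  define S where "S = (\<Sum>k\<le>N. gauss_binom p N k * p^(k*(k - 1) div 2) * z^k)"
  have tri_Suc: "Suc k * k div 2 = k*(k - 1) div 2 + k" for k :: nat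
    by (cases k) (auto simp: algebra_simps)
  have shift: "(\<Sum>k\<le>Suc N. g k) = g 0 + (\<Sum>k\<le>N. g (Suc k))" for g :: "nat \<Rightarrow> 'a"
    by (rule sum.atMost_Suc_shift)
  have "S = (\<Sum>k\<le>Suc N. gauss_binom p N k * p^(k*(k - 1) div 2) * z^k)"
    unfolding S_def by (simp add: gauss_binom_eq_0)
  then have upper: "(\<Sum>k\<le>N. gauss_binom p N (Suc k) * p^(Suc k * k div 2) * z^Suc k) = S - 1"
    unfolding shift by simp
  have lower: "(\<Sum>k\<le>N. p^(N - k) * gauss_binom p N k * p^(Suc k * k div 2) * z^Suc k)
      = z * p^N * S"
    unfolding S_def sum_distrib_left
  proof (rule sum.cong[OF refl])
    fix k assume "k \<in> {..N}"
    then have "p^(N - k) * p^(Suc k * k div 2) = p^N * p^(k*(k - 1) div 2)"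
      unfolding tri_Suc by (simp flip: power_add)
    then show "p^(N - k) * gauss_binom p N k * p^(Suc k * k div 2) * z^Suc k
        = z * p^N * (gauss_binom p N k * p^(k*(k - 1) div 2) * z^k)"
      by (simp add: algebra_simps)
  qed
  have "(\<Sum>k\<le>Suc N. gauss_binom p (Suc N) k * p^(k*(k - 1) div 2) * z^k)
      = 1 + (\<Sum>k\<le>N. gauss_binom p N (Suc k) * p^(Suc k * k div 2) * z^Suc k)
          + (\<Sum>k\<le>N. p^(N - k) * gauss_binom p N k * p^(Suc k * k div 2) * z^Suc k)"
    unfolding shift by (simp add: algebra_simps sum.distrib)
  also have "\<dots> = S * (1 + z * p^N)"
    unfolding upper lower by (simp add: algebra_simps)
  finally have "(\<Sum>k\<le>Suc N. gauss_binom p (Suc N) k * p^(k*(k - 1) div 2) * z^k)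
      = S * (1 + z * p^N)" .
  then show ?case
    using Suc.IH unfolding S_def by simp
qed

lemma qpoch_fin_nonzero:
  fixes p :: complex
  assumes "norm p < 1"
  shows "qpoch_fin p n \<noteq> 0"
proof -
  have "norm (p^Suc i) < 1" for i
    using assms by (simp add: norm_power power_less_one_iff del: power_Suc)
  then have "1 - p^Suc i \<noteq> 0" for i
    by (metis norm_one order.irrefl right_minus_eq)
  then show ?thesis
    unfolding qpoch_fin_def by simp
qed

lemma gauss_binom_eq_qpoch_fin:
  fixes p :: complex
  assumes "norm p < 1" "k \<le> N"
  shows "gauss_binom p N k = qpoch_fin p N / (qpoch_fin p k * qpoch_fin p (N - k))"
  using gauss_binom_mult_qpoch_fin[OF assms(2), of p] qpoch_fin_nonzero[OF assms(1)]
  by (simp add: field_simps)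

lemma gauss_binom_symmetric:
  fixes p :: complex
  assumes "norm p < 1" "k \<le> N"
  shows "gauss_binom p N k = gauss_binom p N (N - k)"
  using assms gauss_binom_eq_qpoch_fin[OF assms] gauss_binom_eq_qpoch_fin[OF assms(1), of "N - k" N]
  by (simp add: mult.commute)

lemma qpoch_fin_tendsto:
  assumes "norm p < 1"
  shows "qpoch_fin p \<longlonglongrightarrow> qpoch p 1 1"
proof -
  have "convergent_prod (\<lambda>i. 1 - p^Suc i)"
    using convergent_prod_qpoch[OF assms, of 1 1] by simp
  then have "(\<lambda>n. \<Prod>i<n. 1 - p^Suc i) \<longlonglongrightarrow> (\<Prod>i. 1 - p^Suc i)"
    by (intro has_prod_imp_tendsto' convergent_prod_has_prod)
  then show ?thesis
    unfolding qpoch_fin_def[abs_def] qpoch_def by simp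
qed

text \<open>Both \<open>(p; p)\<^sub>n\<close> and its inverse converge, hence are bounded.\<close>
lemma gauss_binom_bounded:
  fixes p :: complex
  assumes "norm p < 1"
  obtains B where "\<And>N k. norm (gauss_binom p N k) \<le> B"
proof -
  have lim: "qpoch_fin p \<longlonglongrightarrow> qpoch p 1 1"
    by (rule qpoch_fin_tendsto[OF assms])
  obtain U where U: "U > 0" "\<And>n. norm (qpoch_fin p n) \<le> U"
    using convergent_imp_Bseq[OF convergentI[OF lim]] by (auto elim: BseqE)
  have "(\<lambda>n. inverse (qpoch_fin p n)) \<longlonglongrightarrow> inverse (qpoch p 1 1)"
    using lim qpoch_nonzero[OF assms] by (intro tendsto_inverse) auto
  then have "Bseq (\<lambda>n. inverse (qpoch_fin p n))"
    by (intro convergent_imp_Bseq convergentI)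
  then obtain L where L: "L > 0" "\<And>n. norm (inverse (qpoch_fin p n)) \<le> L"
    by (auto elim: BseqE)
  have "norm (gauss_binom p N k) \<le> U * L * L" for N k
  proof (cases "k \<le> N")
    case True
    have "norm (gauss_binom p N k)
        = norm (qpoch_fin p N) * norm (inverse (qpoch_fin p k)) * norm (inverse (qpoch_fin p (N - k)))"
      by (simp add: gauss_binom_eq_qpoch_fin[OF assms True] norm_divide norm_mult norm_inverse
          divide_inverse)
    also have "\<dots> \<le> U * L * L"
      using U L by (intro mult_mono) auto
    finally show ?thesis .
  next
    case False
    with U L show ?thesis
      by (simp add: gauss_binom_eq_0)
  qed
  then show ?thesis
    using that by blast
qed

lemma tendsto_gauss_binom_central:
  assumes "norm p < 1"
  shows "(\<lambda>n. gauss_binom p (2*n) (n + j)) \<longlonglongrightarrow> 1 / qpoch p 1 1"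
proof -
  have lim: "qpoch_fin p \<longlonglongrightarrow> qpoch p 1 1"
    by (rule qpoch_fin_tendsto[OF assms])
  have "(\<lambda>n. qpoch_fin p (2*n)) \<longlonglongrightarrow> qpoch p 1 1"
    using LIMSEQ_subseq_LIMSEQ[OF lim, of "\<lambda>n. 2*n"] by (auto simp: strict_mono_def o_def)
  moreover have "(\<lambda>n. qpoch_fin p (n + j)) \<longlonglongrightarrow> qpoch p 1 1"
    by (rule LIMSEQ_ignore_initial_segment[OF lim])
  moreover have "(\<lambda>n. qpoch_fin p (n - j)) \<longlonglongrightarrow> qpoch p 1 1"
    by (rule filterlim_compose[OF lim filterlim_minus_const_nat_at_top])
  ultimately have "(\<lambda>n. qpoch_fin p (2*n) / (qpoch_fin p (n + j) * qpoch_fin p (n - j)))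
      \<longlonglongrightarrow> qpoch p 1 1 / (qpoch p 1 1 * qpoch p 1 1)"
    using qpoch_nonzero[OF assms] by (intro tendsto_divide tendsto_mult) auto
  moreover have "eventually (\<lambda>n. qpoch_fin p (2*n) / (qpoch_fin p (n + j) * qpoch_fin p (n - j))
      = gauss_binom p (2*n) (n + j)) sequentially"
    using eventually_ge_at_top[of j]
  proof eventually_elim
    case (elim n)
    then have "2*n - (n + j) = n - j"
      by simp
    then show ?case
      using gauss_binom_eq_qpoch_fin[OF assms, of "n + j" "2*n"] elim by simp
  qed
  ultimately show ?thesis
    using qpoch_nonzero[OF assms] by (simp add: Lim_transform_eventually)
qed

section \<open>Theta series\<close>

definition choose2 :: "int \<Rightarrow> int" where
  "choose2 m = m * (m - 1) div 2"

lemma two_mult_choose2: "2 * choose2 m = m * (m - 1)"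
  unfolding choose2_def by simp

lemma choose2_plus_1: "choose2 (m + 1) = choose2 m + m"
  using two_mult_choose2[of "m + 1"] two_mult_choose2[of m] by (simp add: algebra_simps)

lemma choose2_uminus: "choose2 (-m) = choose2 m + m"
  using two_mult_choose2[of "-m"] two_mult_choose2[of m] by (simp add: algebra_simps)

lemma choose2_add_diff: "choose2 (k + l) + choose2 (k - l) = 2 * choose2 k + 2 * choose2 l + l"
  using two_mult_choose2[of "k + l"] two_mult_choose2[of "k - l"]
    two_mult_choose2[of k] two_mult_choose2[of l]
  by (simp add: algebra_simps)

lemma choose2_of_nat_diff:
  "choose2 (int k - int n) = int (Suc n * n div 2) + int (k * (k - 1) div 2) - int n * int k"
proof -
  have "2 * int (k * (k - 1) div 2) = int k * (int k - 1)"
    by (cases k) (simp_all add: algebra_simps of_nat_div)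
  moreover have "2 * int (Suc n * n div 2) = (int n + 1) * int n"
    by (simp add: algebra_simps of_nat_div)
  ultimately show ?thesis
    using two_mult_choose2[of "int k - int n"] by (simp add: algebra_simps)
qed

definition theta_term :: "complex \<Rightarrow> complex \<Rightarrow> int \<Rightarrow> complex" where
  "theta_term x p m = (-x) powi m * p powi choose2 m"

definition theta :: "complex \<Rightarrow> complex \<Rightarrow> complex" where
  "theta x p = (\<Sum>\<^sub>\<infinity>m. theta_term x p m)"

lemma theta_term_plus_1:
  assumes "p \<noteq> 0"
  shows "theta_term x p (int (Suc k)) = theta_term x p (int k) * (-x) * p^k"
proof -
  have "(-x) powi (int k + 1) = (-x) powi (int k) * (-x)"
    by (rule power_int_add_1) auto
  moreover have "p powi choose2 (int k + 1) = p powi choose2 (int k) * p^k"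
    using assms by (simp add: choose2_plus_1 power_int_add)
  ultimately show ?thesis
    by (simp add: theta_term_def algebra_simps)
qed

lemma theta_term_uminus_index:
  assumes "p \<noteq> 0" "x \<noteq> 0"
  shows "theta_term x p (-m) = theta_term (p/x) p m"
proof -
  have "(-(p/x)) powi m = p powi m * (-x) powi (-m)"
    using assms
    by (simp add: power_int_minus power_int_divide_distrib field_simps
        flip: power_int_mult_distrib)
  then show ?thesis
    using assms by (simp add: theta_term_def choose2_uminus power_int_add algebra_simps)
qed

lemma theta_term_uminus: "theta_term (-x) p m = (-1) powi m * theta_term x p m"
  unfolding theta_term_def by (simp add: power_int_mult_distrib[symmetric])

lemma summable_norm_theta_term:
  assumes "p \<noteq> 0" "norm p < 1"
  shows "summable (\<lambda>k. norm (theta_term x p (int k)))"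
proof -
  have "(\<lambda>n. norm x * norm p ^ n) \<longlonglongrightarrow> 0"
    using assms by (intro tendsto_mult_right_zero LIMSEQ_power_zero) auto
  then have "eventually (\<lambda>n. norm x * norm p ^ n < 1/2) sequentially"
    by (rule order_tendstoD) simp
  then obtain N where N: "\<And>n. n \<ge> N \<Longrightarrow> norm x * norm p ^ n < 1/2"
    by (auto simp: eventually_sequentially)
  show ?thesis
  proof (rule summable_ratio_test[of "1/2" N])
    fix n assume "n \<ge> N"
    have "norm (theta_term x p (int (Suc n))) = norm (theta_term x p (int n)) * (norm x * norm p ^ n)"
      using theta_term_plus_1[OF assms(1), of x n] by (simp add: norm_mult norm_power)
    also have "\<dots> \<le> norm (theta_term x p (int n)) * (1/2)"
      using N[OF \<open>n \<ge> N\<close>] by (intro mult_left_mono) auto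
    finally show "norm (norm (theta_term x p (int (Suc n))))
        \<le> 1/2 * norm (norm (theta_term x p (int n)))"
      by simp
  qed simp
qed

lemma summable_norm_theta_term_neg:
  assumes "p \<noteq> 0" "norm p < 1" "x \<noteq> 0"
  shows "summable (\<lambda>k. norm (theta_term x p (- int k - 1)))"
proof -
  have "theta_term x p (- int k - 1) = theta_term (p/x) p (int (Suc k))" for k
  proof -
    have "- int k - 1 = - int (Suc k)"
      by simp
    then show ?thesis
      using theta_term_uminus_index[OF assms(1,3), of "int (Suc k)"] by (simp only:)
  qed
  moreover have "summable (\<lambda>k. norm (theta_term (p/x) p (int (Suc k))))"
    using summable_norm_theta_term[OF assms(1,2), of "p/x"] by (subst summable_Suc_iff)
  ultimately show ?thesis
    by simp
qed

lemma has_sum_int_split: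
  fixes c :: "int \<Rightarrow> 'a::banach"
  assumes "summable (\<lambda>k. norm (c (int k)))" "summable (\<lambda>k. norm (c (- int k - 1)))"
  shows "(c has_sum (\<Sum>k. c (int k) + c (- int k - 1))) UNIV"
proof -
  have nonneg: "(c has_sum (\<Sum>k. c (int k))) (range int)"
    using norm_summable_imp_has_sum[OF assms(1) summable_sums[OF summable_norm_cancel[OF assms(1)]]]
    by (subst has_sum_reindex) (auto simp: o_def)
  have neg: "(c has_sum (\<Sum>k. c (- int k - 1))) (range (\<lambda>k. - int k - 1))"
    using norm_summable_imp_has_sum[OF assms(2) summable_sums[OF summable_norm_cancel[OF assms(2)]]]
    by (subst has_sum_reindex) (auto simp: o_def inj_on_def)
  have "range int \<union> range (\<lambda>k. - int k - 1) = UNIV"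
  proof (intro set_eqI iffI)
    fix m :: int
    show "m \<in> range int \<union> range (\<lambda>k. - int k - 1)"
    proof (cases "m \<ge> 0")
      case True
      then show ?thesis by (auto intro!: image_eqI[of _ _ "nat m"])
    next
      case False
      then show ?thesis by (auto intro!: image_eqI[of _ _ "nat (-m - 1)"])
    qed
  qed auto
  moreover have "(\<Sum>k. c (int k) + c (- int k - 1)) = (\<Sum>k. c (int k)) + (\<Sum>k. c (- int k - 1))"
    using suminf_add[OF summable_norm_cancel[OF assms(1)] summable_norm_cancel[OF assms(2)]] by simp
  moreover have "range int \<inter> range (\<lambda>k. - int k - 1) = {}"
    by auto
  ultimately show ?thesis
    using has_sum_Un_disjoint[OF nonneg neg] by simp
qed

lemma has_sum_theta_term:
  assumes "p \<noteq> 0" "norm p < 1" "x \<noteq> 0"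
  shows "(theta_term x p has_sum (\<Sum>k. theta_term x p (int k) + theta_term x p (- int k - 1))) UNIV"
  using assms by (intro has_sum_int_split summable_norm_theta_term summable_norm_theta_term_neg)

lemma theta_eq_suminf:
  assumes "p \<noteq> 0" "norm p < 1" "x \<noteq> 0"
  shows "theta x p = (\<Sum>k. theta_term x p (int k) + theta_term x p (- int k - 1))"
  unfolding theta_def using has_sum_theta_term[OF assms] by (rule infsumI)

lemma has_sum_theta:
  assumes "p \<noteq> 0" "norm p < 1" "x \<noteq> 0"
  shows "(theta_term x p has_sum theta x p) UNIV"
  unfolding theta_eq_suminf[OF assms] by (rule has_sum_theta_term[OF assms])

section \<open>The Jacobi triple product\<close>

lemma prod_divide_power_Suc:
  fixes c p :: "'a::field"
  shows "(\<Prod>i<n. c / p^Suc i) = c^n / p^(Suc n * n div 2)"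
proof -
  have "(\<Prod>i<n. c / p^Suc i) = c^n / (\<Prod>i<n. p^Suc i)"
    using prod_dividef[of "\<lambda>i. c" "\<lambda>i. p^Suc i" "{..<n}"]
    by (simp only: prod_constant card_lessThan)
  also have "(\<Prod>i<n. p^Suc i) = p^(\<Sum>i<n. Suc i)"
    by (simp add: power_sum)
  also have "(\<Sum>i<n. Suc i) = Suc n * n div 2"
    by (induction n) (auto simp: algebra_simps)
  finally show ?thesis .
qed

text \<open>Substitute \<open>z = -x / p\<^sup>n\<close> into the q-binomial theorem with \<open>2n\<close> factors: read
  backwards, the first \<open>n\<close> factors are \<open>(-x / p\<^bsup>i+1\<^esup>) (1 - p\<^bsup>i+1\<^esup> / x)\<close>, and the
  last \<open>n\<close> are \<open>1 - x p\<^sup>i\<close>.\<close>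
lemma finite_triple_product:
  fixes x p :: complex
  assumes p: "p \<noteq> 0" and x: "x \<noteq> 0"
  shows "(\<Prod>k<n. (1 - x*p^k) * (1 - p^Suc k / x))
       = (\<Sum>k\<le>2*n. gauss_binom p (2*n) k * theta_term x p (int k - int n))"
proof -
  define z where "z = -x / p^n"
  define T where "T = Suc n * n div 2"
  have upper: "(\<Prod>i<n. 1 + z*p^(n+i)) = (\<Prod>i<n. 1 - x*p^i)"
    by (intro prod.cong refl) (simp add: z_def power_add p)
  have lower: "(\<Prod>i<n. 1 + z*p^i) = (\<Prod>i<n. (-x / p^Suc i) * (1 - p^Suc i / x))"
  proof -
    have "(\<Prod>i<n. 1 + z*p^i) = (\<Prod>i<n. 1 + z*p^(n - Suc i))"
      by (rule prod.nat_diff_reindex[symmetric])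
    also have "\<dots> = (\<Prod>i<n. (-x / p^Suc i) * (1 - p^Suc i / x))"
    proof (intro prod.cong refl)
      fix i assume "i \<in> {..<n}"
      then have "p^n = p^(n - Suc i) * p^Suc i"
        by (simp flip: power_add del: power_Suc)
      then show "1 + z*p^(n - Suc i) = (-x / p^Suc i) * (1 - p^Suc i / x)"
        using p x by (simp add: z_def field_simps)
    qed
    finally show ?thesis .
  qed
  have prefactor: "(\<Prod>i<n. -x / p^Suc i) = (-x)^n / p^T"
    unfolding T_def by (rule prod_divide_power_Suc)
  have prod_add: "(\<Prod>i<n + m. g i) = (\<Prod>i<n. g i) * (\<Prod>i<m. g (n + i))"
    for m and g :: "nat \<Rightarrow> complex"
    by (induction m) (auto simp: algebra_simps)
  have "(\<Prod>k<n. (1 - x*p^k) * (1 - p^Suc k / x)) = p^T / (-x)^n * (\<Prod>i<2*n. 1 + z*p^i)"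
    unfolding mult_2 prod_add lower upper prod.distrib prefactor
    using p x by (simp add: field_simps)
  also have "\<dots> = (\<Sum>k\<le>2*n. gauss_binom p (2*n) k * (p^T / (-x)^n * p^(k*(k - 1) div 2) * z^k))"
    unfolding q_binomial_theorem sum_distrib_left by (simp add: algebra_simps)
  also have "\<dots> = (\<Sum>k\<le>2*n. gauss_binom p (2*n) k * theta_term x p (int k - int n))"
  proof (intro sum.cong refl arg_cong2[where f="(*)"])
    fix k
    have "p powi choose2 (int k - int n) = p^T * p^(k*(k - 1) div 2) / p^(n*k)"
      using p by (simp add: choose2_of_nat_diff T_def power_int_diff power_int_add
          flip: of_nat_mult)
    moreover have "z^k = (-x)^k / p^(n*k)"
      unfolding z_def power_mult by (rule power_divide)
    ultimately show "p^T / (-x)^n * p^(k*(k - 1) div 2) * z^k = theta_term x p (int k - int n)"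
      using x by (simp add: theta_term_def power_int_diff field_simps)
  qed
  finally show ?thesis .
qed

text \<open>Folding the terms \<open>k < n\<close> onto \<open>k > n\<close> by the symmetry of the Gaussian
  binomials.\<close>
lemma finite_triple_product_suminf:
  fixes x p :: complex
  assumes "p \<noteq> 0" "norm p < 1" "x \<noteq> 0"
  shows "(\<Prod>k<n. (1 - x*p^k) * (1 - p^Suc k / x))
       = (\<Sum>j. gauss_binom p (2*n) (n + j) * theta_term x p (int j)
             + gauss_binom p (2*n) (n + j + 1) * theta_term x p (- int j - 1))"
proof -
  define F where "F k = gauss_binom p (2*n) k * theta_term x p (int k - int n)" for k
  define a where "a j = gauss_binom p (2*n) (n + j) * theta_term x p (int j)" for j
  define b where "b j = gauss_binom p (2*n) (n + j + 1) * theta_term x p (- int j - 1)" for j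
  have "(\<Sum>k<n. F k) = (\<Sum>j<n. F (n - Suc j))"
    by (rule sum.nat_diff_reindex[symmetric])
  also have "\<dots> = (\<Sum>j<n. b j)"
  proof (rule sum.cong[OF refl])
    fix j assume "j \<in> {..<n}"
    then have "2*n - (n - Suc j) = n + j + 1" and "int (n - Suc j) - int n = - int j - 1"
      by auto
    then show "F (n - Suc j) = b j"
      unfolding F_def b_def using gauss_binom_symmetric[OF assms(2), of "n - Suc j" "2*n"]
      by (simp only: diff_le_self)
  qed
  finally have lower: "(\<Sum>k<n. F k) = (\<Sum>j<n. b j)" .
  have "(\<Sum>k\<in>{n..2*n}. F k) = (\<Sum>j\<le>n. F (j + n))"
    using sum.shift_bounds_cl_nat_ivl[of F 0 n n] by (simp add: atLeast0AtMost mult_2)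
  then have upper: "(\<Sum>k\<in>{n..2*n}. F k) = (\<Sum>j\<le>n. a j)"
    unfolding F_def a_def by (simp add: add.commute)
  have "(\<Sum>k\<le>2*n. F k) = (\<Sum>k<n. F k) + (\<Sum>k\<in>{n..2*n}. F k)"
    by (subst sum.union_disjoint[symmetric]) (auto intro!: sum.cong)
  also have "\<dots> = (\<Sum>j\<le>n. a j + b j)"
  proof -
    have "b n = 0"
      by (simp add: b_def gauss_binom_eq_0)
    then show ?thesis
      unfolding lower upper sum.distrib by (simp add: lessThan_Suc_atMost[symmetric])
  qed
  also have "\<dots> = (\<Sum>j. a j + b j)"
    by (rule suminf_finite[symmetric]) (auto simp: a_def b_def gauss_binom_eq_0)
  finally show ?thesis
    using finite_triple_product[OF assms(1,3), of n] unfolding F_def a_def b_def by simp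
qed

text \<open>Termwise the Gaussian binomials tend to \<open>1 / (p; p)\<^sub>\<infinity>\<close>, and they are
  uniformly bounded, so the theta series is a summable majorant and Tannery's theorem
  applies.\<close>
lemma tendsto_finite_triple_product_suminf:
  fixes x p :: complex
  assumes p: "p \<noteq> 0" "norm p < 1" and x: "x \<noteq> 0"
  shows "(\<lambda>n. \<Sum>j. gauss_binom p (2*n) (n + j) * theta_term x p (int j)
             + gauss_binom p (2*n) (n + j + 1) * theta_term x p (- int j - 1))
       \<longlonglongrightarrow> theta x p / qpoch p 1 1"
proof -
  obtain B where B: "\<And>N k. norm (gauss_binom p N k) \<le> B"
    using gauss_binom_bounded[OF p(2)] by blast
  define A where "A j n = gauss_binom p (2*n) (n + j) * theta_term x p (int j)
      + gauss_binom p (2*n) (n + j + 1) * theta_term x p (- int j - 1)" for j n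
  define b where "b j = (theta_term x p (int j) + theta_term x p (- int j - 1)) / qpoch p 1 1" for j
  define M where "M j = B * (norm (theta_term x p (int j)) + norm (theta_term x p (- int j - 1)))" for j
  have "(\<lambda>n. A j n) \<longlonglongrightarrow> b j" for j
  proof -
    have "(\<lambda>n. A j n) \<longlonglongrightarrow> 1 / qpoch p 1 1 * theta_term x p (int j)
        + 1 / qpoch p 1 1 * theta_term x p (- int j - 1)"
      unfolding A_def add.assoc[of _ j 1]
      by (intro tendsto_intros tendsto_gauss_binom_central[OF p(2)])
    then show ?thesis
      by (simp add: b_def add_divide_distrib)
  qed
  moreover have "norm (A j n) \<le> M j" for j n
  proof -
    have "norm (A j n) \<le> norm (gauss_binom p (2*n) (n + j)) * norm (theta_term x p (int j))
        + norm (gauss_binom p (2*n) (n + j + 1)) * norm (theta_term x p (- int j - 1))"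
      unfolding A_def by (rule order.trans[OF norm_triangle_ineq]) (simp add: norm_mult)
    also have "\<dots> \<le> M j"
      unfolding M_def distrib_left by (intro add_mono mult_right_mono B) auto
    finally show ?thesis .
  qed
  moreover have "summable M"
    unfolding M_def using p x
    by (intro summable_mult summable_add summable_norm_theta_term summable_norm_theta_term_neg)
  ultimately have "(\<lambda>n. \<Sum>j. A j n) \<longlonglongrightarrow> suminf b"
    using tannerys_theorem[of A b sequentially M] by (auto intro: always_eventually)
  also have "suminf b = theta x p / qpoch p 1 1"
    unfolding b_def theta_eq_suminf[OF p x]
    using summable_norm_cancel[OF summable_norm_theta_term[OF p(1,2)]]
      summable_norm_cancel[OF summable_norm_theta_term_neg[OF p x]]
    by (intro suminf_divide summable_add)
  finally show ?thesis
    unfolding A_def .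
qed

theorem jacobi_triple_product:
  fixes x p :: complex
  assumes p: "p \<noteq> 0" "norm p < 1" and x: "x \<noteq> 0"
  shows "(\<Prod>n. (1 - x*p^n) * (1 - p^Suc n / x) * (1 - p^Suc n)) = theta x p"
proof -
  define g where "g k = (1 - x*p^k) * (1 - p^Suc k / x)" for k
  have "convergent_prod (\<lambda>k. 1 - x*p^k)"
    using convergent_prod_one_plus_geometric[OF p(2), of "-x"] by simp
  moreover have "convergent_prod (\<lambda>k. 1 - p^Suc k / x)"
  proof -
    have "1 + (-(p/x)) * p^k = 1 - p^Suc k / x" for k
      by (simp add: field_simps)
    then show ?thesis
      using convergent_prod_one_plus_geometric[OF p(2), of "-(p/x)"] by simp
  qed
  ultimately have g: "convergent_prod g"
    unfolding g_def by (rule convergent_prod_mult)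
  have "(\<lambda>n. \<Prod>k<n. g k) \<longlonglongrightarrow> prodinf g"
    using g by (intro has_prod_imp_tendsto' convergent_prod_has_prod)
  then have "prodinf g = theta x p / qpoch p 1 1"
    using tendsto_finite_triple_product_suminf[OF p x]
    unfolding g_def finite_triple_product_suminf[OF p x] by (rule LIMSEQ_unique)
  moreover have "(\<Prod>n. (1 - x*p^n) * (1 - p^Suc n / x) * (1 - p^Suc n)) = prodinf g * qpoch p 1 1"
    using prodinf_mult[OF g convergent_prod_qpoch[OF p(2), of 1 1]]
    unfolding g_def qpoch_def by simp
  ultimately show ?thesis
    using qpoch_nonzero[OF p(2)] by simp
qed

section \<open>Ramanujan's product formula for theta series\<close>

lemma has_sum_mult_Times:
  fixes a :: "'i \<Rightarrow> complex" and b :: "'j \<Rightarrow> complex"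
  assumes a: "(a has_sum A) I" and b: "(b has_sum B) J"
  shows "((\<lambda>(m, n). a m * b n) has_sum A * B) (I \<times> J)"
proof -
  have "(\<lambda>m. norm (a m)) summable_on I" "(\<lambda>n. norm (b n)) summable_on J"
    using a b by (auto simp flip: summable_on_iff_abs_summable_on_complex intro: has_sum_imp_summable)
  then obtain NA NB where NA: "((\<lambda>m. norm (a m)) has_sum NA) I"
    and NB: "((\<lambda>n. norm (b n)) has_sum NB) J"
    by (auto simp: summable_on_def)
  define F where "F z = norm (a (fst z)) * norm (b (snd z))" for z
  define H where "H z = a (fst z) * b (snd z)" for z
  have "F summable_on Sigma I (\<lambda>_. J)"
  proof (rule summable_on_SigmaI[where g="\<lambda>m. norm (a m) * NB"])
    show "((\<lambda>n. F (m, n)) has_sum norm (a m) * NB) J" for m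
      unfolding F_def fst_conv snd_conv by (rule has_sum_cmult_right[OF NB])
    show "(\<lambda>m. norm (a m) * NB) summable_on I"
      using has_sum_imp_summable[OF NA] by (rule summable_on_cmult_left)
  qed (simp add: F_def)
  then have "(\<lambda>z. norm (H z)) summable_on Sigma I (\<lambda>_. J)"
    unfolding F_def H_def norm_mult .
  then have "H summable_on Sigma I (\<lambda>_. J)"
    by (rule abs_summable_summable)
  then have "(H has_sum A * B) (Sigma I (\<lambda>_. J))"
  proof (rule has_sum_SigmaI[rotated 2])
    show "((\<lambda>n. H (m, n)) has_sum a m * B) J" for m
      unfolding H_def fst_conv snd_conv by (rule has_sum_cmult_right[OF b])
    show "((\<lambda>m. a m * B) has_sum A * B) I"
      by (rule has_sum_cmult_left[OF a])
  qed
  moreover have "H = (\<lambda>(m, n). a m * b n)"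
    by (auto simp: H_def fun_eq_iff)
  ultimately show ?thesis
    by simp
qed

lemma has_sum_even_pairs_reindex:
  fixes G :: "int \<times> int \<Rightarrow> 'a::topological_comm_monoid_add"
  assumes "\<And>m n. odd (m + n) \<Longrightarrow> G (m, n) = 0"
  shows "(G has_sum S) UNIV \<longleftrightarrow> ((\<lambda>(k, l). G (k + l, k - l)) has_sum S) UNIV"
proof -
  define \<phi> where "\<phi> = (\<lambda>(k, l). (k + l, k - l :: int))"
  have "inj \<phi>"
    unfolding \<phi>_def inj_def by auto
  have "range \<phi> = {(m, n). even (m + n)}"
  proof (intro set_eqI iffI)
    fix mn :: "int \<times> int"
    assume "mn \<in> {(m, n). even (m + n)}"
    then obtain m n where "mn = (m, n)" "even (m + n)"
      by auto
    moreover from this(2) obtain t where "m + n = 2*t"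
      by (rule evenE)
    ultimately have "mn = \<phi> (t, m - t)"
      unfolding \<phi>_def by simp
    then show "mn \<in> range \<phi>"
      by blast
  qed (auto simp: \<phi>_def)
  then have "(G has_sum S) UNIV \<longleftrightarrow> (G has_sum S) (range \<phi>)"
    using assms by (intro has_sum_cong_neutral) auto
  also have "\<dots> \<longleftrightarrow> ((G \<circ> \<phi>) has_sum S) UNIV"
    by (rule has_sum_reindex[OF \<open>inj \<phi>\<close>])
  finally show ?thesis
    by (simp add: \<phi>_def o_def case_prod_unfold)
qed

lemma theta_term_add_mult_diff:
  fixes x y p :: complex
  assumes "p \<noteq> 0" "x \<noteq> 0" "y \<noteq> 0"
  shows "theta_term x p (k + l) * theta_term y p (k - l)
       = theta_term (-(x*y)) (p^2) k * theta_term (-(p*x/y)) (p^2) l"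
proof -
  have "(-x) powi (k + l) * (-y) powi (k - l)
      = ((-x) powi k * (-y) powi k) * ((-x) powi l / (-y) powi l)"
    using assms by (simp add: power_int_add power_int_diff)
  also have "\<dots> = (x*y) powi k * (x/y) powi l"
    by (simp flip: power_int_mult_distrib power_int_divide_distrib)
  finally have "(-x) powi (k + l) * (-y) powi (k - l) = (x*y) powi k * (x/y) powi l" .
  moreover have "p powi choose2 (k + l) * p powi choose2 (k - l)
      = (p^2) powi choose2 k * (p^2) powi choose2 l * p powi l"
  proof -
    have "p powi choose2 (k + l) * p powi choose2 (k - l) = p powi (choose2 (k + l) + choose2 (k - l))"
      using assms by (simp add: power_int_add)
    also have "\<dots> = p powi (2 * choose2 k) * p powi (2 * choose2 l) * p powi l"
      unfolding choose2_add_diff using assms by (simp add: power_int_add)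
    finally show ?thesis
      by (simp add: power_int_power)
  qed
  ultimately show ?thesis
    by (simp add: theta_term_def power_int_mult_distrib power_int_divide_distrib algebra_simps)
qed

text \<open>Entry 29 of Chapter 16 of Ramanujan's notebooks (Berndt, Part III). In the double
  series for the left-hand side only pairs \<open>(m, n)\<close> with \<open>m + n\<close> even survive;
  substituting \<open>m = k + l\<close>, \<open>n = k - l\<close> separates it into the right-hand side.\<close>
theorem theta_mult_theta_add_theta_mult_theta:
  fixes x y p :: complex
  assumes p: "p \<noteq> 0" "norm p < 1" and x: "x \<noteq> 0" and y: "y \<noteq> 0"
  shows "theta x p * theta y p + theta (-x) p * theta (-y) p
       = 2 * theta (-(x*y)) (p^2) * theta (-(p*x/y)) (p^2)"
proof -
  have p2: "p^2 \<noteq> 0" "norm (p^2) < 1"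
    using p by (auto simp: norm_power power_less_one_iff)
  define G where "G = (\<lambda>(m, n). theta_term x p m * theta_term y p n
      + theta_term (-x) p m * theta_term (-y) p n)"
  have "(G has_sum theta x p * theta y p + theta (-x) p * theta (-y) p) UNIV"
    unfolding G_def case_prod_unfold
    using has_sum_add[OF has_sum_mult_Times has_sum_mult_Times, OF has_sum_theta has_sum_theta
        has_sum_theta has_sum_theta] p x y
    by (simp add: case_prod_unfold)
  moreover have G: "G (m, n) = (if even (m + n) then 2 * (theta_term x p m * theta_term y p n) else 0)"
    for m n
  proof -
    have "G (m, n) = theta_term x p m * theta_term y p n * (1 + (-1) powi (m + n))"
      unfolding G_def theta_term_uminus by (simp add: power_int_add algebra_simps)
    then show ?thesis
      by (cases "m + n \<ge> 0") (auto simp: power_int_def even_nat_iff)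
  qed
  ultimately have "((\<lambda>(k, l). G (k + l, k - l))
      has_sum theta x p * theta y p + theta (-x) p * theta (-y) p) UNIV"
    by (subst (asm) has_sum_even_pairs_reindex) auto
  moreover have "((\<lambda>(k, l). G (k + l, k - l))
      has_sum 2 * (theta (-(x*y)) (p^2) * theta (-(p*x/y)) (p^2))) UNIV"
  proof -
    have "(\<lambda>(k, l). G (k + l, k - l))
        = (\<lambda>(k, l). 2 * (theta_term (-(x*y)) (p^2) k * theta_term (-(p*x/y)) (p^2) l))"
      by (auto simp: G theta_term_add_mult_diff[OF p(1) x y] simp del: even_add)
    moreover have "((\<lambda>(k, l). theta_term (-(x*y)) (p^2) k * theta_term (-(p*x/y)) (p^2) l)
        has_sum theta (-(x*y)) (p^2) * theta (-(p*x/y)) (p^2)) (UNIV \<times> UNIV)"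
      using p2 p x y by (intro has_sum_mult_Times has_sum_theta) auto
    ultimately show ?thesis
      by (simp add: has_sum_cmult_right case_prod_unfold)
  qed
  ultimately show ?thesis
    by (simp add: has_sum_unique mult.assoc)
qed

section \<open>Theta series as eta quotients\<close>

lemma theta_eq_prodinf:
  fixes q s :: complex
  assumes q: "norm q < 1" "q \<noteq> 0" and a: "0 < a" "a < d" and s: "s * s = 1"
  shows "theta (s * q^a) (q^d)
       = (\<Prod>n. 1 - s * q^(a + d*n)) * (\<Prod>n. 1 - s * q^(d - a + d*n)) * qpoch q d d"
proof -
  have d: "d > 0" "norm (q^d) < 1" "q^d \<noteq> 0"
    using a q by (auto simp: norm_power power_less_one_iff)
  have factor: "(1 - (s * q^a) * (q^d)^n) * (1 - (q^d)^Suc n / (s * q^a)) * (1 - (q^d)^Suc n)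
      = (1 - s * q^(a + d*n)) * (1 - s * q^(d - a + d*n)) * (1 - q^(d + d*n))" for n
  proof -
    have "(q^d)^Suc n = q^(d - a + d*n) * q^a"
      using a by (simp flip: power_mult power_add add: algebra_simps)
    then have "(q^d)^Suc n / (s * q^a) = q^(d - a + d*n) * inverse s"
      using q(2) by (simp add: divide_inverse)
    also have "inverse s = s"
      using s by (rule inverse_unique)
    finally have "(q^d)^Suc n / (s * q^a) = s * q^(d - a + d*n)"
      by (simp only: mult.commute)
    moreover have "(q^d)^Suc n = q^(d + d*n)"
      by (simp add: power_add flip: power_mult)
    ultimately show ?thesis
      by (simp add: power_add power_mult mult.assoc)
  qed
  have "s * q^a \<noteq> 0"
    using s q(2) by auto
  then have "theta (s * q^a) (q^d)
      = (\<Prod>n. (1 - (s * q^a) * (q^d)^n) * (1 - (q^d)^Suc n / (s * q^a)) * (1 - (q^d)^Suc n))"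
    by (rule jacobi_triple_product[symmetric, OF d(3,2)])
  also have "\<dots> = (\<Prod>n. (1 - s * q^(a + d*n)) * (1 - s * q^(d - a + d*n)) * (1 - q^(d + d*n)))"
    unfolding factor ..
  also have "\<dots> = (\<Prod>n. 1 - s * q^(a + d*n)) * (\<Prod>n. 1 - s * q^(d - a + d*n)) * qpoch q d d"
  proof -
    have "convergent_prod (\<lambda>n. 1 - s * q^(a + d*n))" "convergent_prod (\<lambda>n. 1 - s * q^(d - a + d*n))"
      using convergent_prod_one_plus_power_arith[OF q(1) d(1), of "-s"] by simp_all
    then show ?thesis
      unfolding qpoch_def
      by (simp add: prodinf_mult[symmetric] convergent_prod_mult convergent_prod_qpoch[OF q(1) d(1)])
  qed
  finally show ?thesis .
qed

lemma theta_eq_qpoch: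
  assumes "norm q < 1" "q \<noteq> 0" "0 < a" "a < d"
  shows "theta (q^a) (q^d) = qpoch q a d * qpoch q (d - a) d * qpoch q d d"
  using theta_eq_prodinf[OF assms, of 1] unfolding qpoch_def by simp

lemma theta_uminus_eq_qpoch:
  assumes "norm q < 1" "q \<noteq> 0" "0 < a" "a < d"
  shows "theta (-(q^a)) (q^d) = qpoch q (2*a) (2*d) / qpoch q a d
      * (qpoch q (2*(d - a)) (2*d) / qpoch q (d - a) d) * qpoch q d d"
proof -
  have "d > 0" "d - a > 0"
    using assms by simp_all
  then show ?thesis
    using theta_eq_prodinf[OF assms, of "-1"] prodinf_one_plus_power_arith[OF assms(1) _ assms(3)]
      prodinf_one_plus_power_arith[OF assms(1), of d "d - a"]
    by simp
qed

lemma f_nonzero: "norm q < 1 \<Longrightarrow> m > 0 \<Longrightarrow> f m q \<noteq> 0"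
  unfolding f_eq_qpoch by (rule qpoch_nonzero)

lemma theta_q_q2:
  assumes "norm q < 1" "q \<noteq> 0"
  shows "theta q (q^2) = f 1 q ^ 2 / f 2 q"
proof -
  have theta: "theta q (q^2) = qpoch q 1 2 * qpoch q 1 2 * qpoch q 2 2"
    using theta_eq_qpoch[OF assms, of 1 2] by simp
  have f1: "f 1 q = qpoch q 1 2 * qpoch q 2 2"
    using qpoch_split_residues[OF assms(1), of 1 2 1] by (simp add: f_eq_qpoch numeral_eq_Suc)
  have "qpoch q 2 2 \<noteq> 0"
    using assms by (simp add: qpoch_nonzero)
  then show ?thesis
    unfolding theta f1 unfolding f_eq_qpoch by (simp add: field_simps power_numeral_reduce)
qed

lemma theta_uminus_q_q2:
  assumes "norm q < 1" "q \<noteq> 0"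
  shows "theta (-q) (q^2) = f 2 q ^ 5 / (f 1 q ^ 2 * f 4 q ^ 2)"
proof -
  have theta: "theta (-q) (q^2)
      = qpoch q 2 4 / qpoch q 1 2 * (qpoch q 2 4 / qpoch q 1 2) * qpoch q 2 2"
    using theta_uminus_eq_qpoch[OF assms, of 1 2] by simp
  have f1: "f 1 q = qpoch q 1 2 * qpoch q 2 2"
    using qpoch_split_residues[OF assms(1), of 1 2 1] by (simp add: f_eq_qpoch numeral_eq_Suc)
  have s2: "qpoch q 2 2 = qpoch q 2 4 * qpoch q 4 4"
    using qpoch_split_residues[OF assms(1), of 2 2 2] by (simp add: numeral_eq_Suc)
  have "qpoch q 1 2 \<noteq> 0" "qpoch q 2 4 \<noteq> 0" "qpoch q 4 4 \<noteq> 0"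
    using assms by (simp_all add: qpoch_nonzero)
  then show ?thesis
    unfolding theta f1 unfolding f_eq_qpoch s2 by (simp add: field_simps power_numeral_reduce)
qed

lemma theta_q_q3:
  assumes "norm q < 1" "q \<noteq> 0"
  shows "theta q (q^3) = f 1 q"
  using theta_eq_qpoch[OF assms, of 1 3] qpoch_split_residues[OF assms(1), of 1 3 1]
  by (simp add: f_eq_qpoch numeral_eq_Suc algebra_simps)

lemma theta_q_q6:
  assumes "norm q < 1" "q \<noteq> 0"
  shows "theta q (q^6) = f 1 q * f 6 q ^ 2 / (f 2 q * f 3 q)"
proof -
  have theta: "theta q (q^6) = qpoch q 1 6 * qpoch q 5 6 * qpoch q 6 6"
    using theta_eq_qpoch[OF assms, of 1 6] by simp
  have f1: "f 1 q = qpoch q 1 6 * qpoch q 2 6 * qpoch q 3 6 * qpoch q 4 6 * qpoch q 5 6 * qpoch q 6 6"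
    using qpoch_split_residues[OF assms(1), of 1 6 1] by (simp add: f_eq_qpoch numeral_eq_Suc)
  have f2: "f 2 q = qpoch q 2 6 * qpoch q 4 6 * qpoch q 6 6"
    using qpoch_split_residues[OF assms(1), of 2 3 2] by (simp add: f_eq_qpoch numeral_eq_Suc)
  have f3: "f 3 q = qpoch q 3 6 * qpoch q 6 6"
    using qpoch_split_residues[OF assms(1), of 3 2 3] by (simp add: f_eq_qpoch numeral_eq_Suc)
  have "qpoch q 2 6 \<noteq> 0" "qpoch q 3 6 \<noteq> 0" "qpoch q 4 6 \<noteq> 0" "qpoch q 6 6 \<noteq> 0"
    using assms by (simp_all add: qpoch_nonzero)
  then show ?thesis
    unfolding theta f1 f2 f3 unfolding f_eq_qpoch by (simp add: field_simps power_numeral_reduce)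
qed

lemma theta_uminus_q_q6:
  assumes "norm q < 1" "q \<noteq> 0"
  shows "theta (-q) (q^6) = f 2 q ^ 2 * f 3 q * f 12 q / (f 1 q * f 4 q * f 6 q)"
proof -
  have theta: "theta (-q) (q^6)
      = qpoch q 2 12 / qpoch q 1 6 * (qpoch q 10 12 / qpoch q 5 6) * qpoch q 6 6"
    using theta_uminus_eq_qpoch[OF assms, of 1 6] by simp
  have f1: "f 1 q = qpoch q 1 6 * qpoch q 2 6 * qpoch q 3 6 * qpoch q 4 6 * qpoch q 5 6 * qpoch q 6 6"
    using qpoch_split_residues[OF assms(1), of 1 6 1] by (simp add: f_eq_qpoch numeral_eq_Suc)
  have f2: "f 2 q = qpoch q 2 6 * qpoch q 4 6 * qpoch q 6 6"
    using qpoch_split_residues[OF assms(1), of 2 3 2] by (simp add: f_eq_qpoch numeral_eq_Suc)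
  have f3: "f 3 q = qpoch q 3 6 * qpoch q 6 6"
    using qpoch_split_residues[OF assms(1), of 3 2 3] by (simp add: f_eq_qpoch numeral_eq_Suc)
  have f4: "f 4 q = qpoch q 4 12 * qpoch q 8 12 * qpoch q 12 12"
    using qpoch_split_residues[OF assms(1), of 4 3 4] by (simp add: f_eq_qpoch numeral_eq_Suc)
  have s2: "qpoch q 2 6 = qpoch q 2 12 * qpoch q 8 12"
    using qpoch_split_residues[OF assms(1), of 6 2 2] by (simp add: numeral_eq_Suc)
  have s4: "qpoch q 4 6 = qpoch q 4 12 * qpoch q 10 12"
    using qpoch_split_residues[OF assms(1), of 6 2 4] by (simp add: numeral_eq_Suc)
  have "qpoch q 1 6 \<noteq> 0" "qpoch q 3 6 \<noteq> 0" "qpoch q 5 6 \<noteq> 0" "qpoch q 6 6 \<noteq> 0"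
    "qpoch q 4 12 \<noteq> 0" "qpoch q 8 12 \<noteq> 0" "qpoch q 12 12 \<noteq> 0"
    using assms by (simp_all add: qpoch_nonzero)
  then show ?thesis
    unfolding theta f1 f2 f3 f4 unfolding f_eq_qpoch s2 s4 by (simp add: field_simps power_numeral_reduce)
qed

lemma eta_quotient_identity:
  fixes q :: complex
  assumes "norm q < 1" "q \<noteq> 0"
  shows "f 1 q * f 6 q ^ 2 / (f 2 q * f 3 q) * (f 6 q ^ 5 / (f 3 q ^ 2 * f 12 q ^ 2))
      + f 2 q ^ 2 * f 3 q * f 12 q / (f 1 q * f 4 q * f 6 q) * (f 3 q ^ 2 / f 6 q)
      = 2 * f 4 q * f 4 q"
proof -
  have q3: "norm (q^3) < 1" "q^3 \<noteq> 0" and q4: "norm (q^4) < 1" "q^4 \<noteq> 0"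
    and q6: "norm (q^6) < 1" "q^6 \<noteq> 0"
    using assms by (simp_all add: norm_power power_less_one_iff)
  have "-(q * -(q^3)) = q^4" "-(q^6 * q / -(q^3)) = q^4" "(q^6)^2 = q^12" "-(-(q^3)) = q^3"
    using assms(2) by (simp_all add: field_simps eval_nat_numeral)
  then have "theta q (q^6) * theta (-(q^3)) (q^6) + theta (-q) (q^6) * theta (q^3) (q^6)
      = 2 * theta (q^4) (q^12) * theta (q^4) (q^12)"
    using theta_mult_theta_add_theta_mult_theta[OF q6(2,1) assms(2), of "-(q^3)"] q3(2)
    by simp
  moreover have "theta (q^3) (q^6) = f 3 q ^ 2 / f 6 q"
    using theta_q_q2[OF q3] by (simp add: f_power flip: power_mult)
  moreover have "theta (-(q^3)) (q^6) = f 6 q ^ 5 / (f 3 q ^ 2 * f 12 q ^ 2)"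
    using theta_uminus_q_q2[OF q3] by (simp add: f_power flip: power_mult)
  moreover have "theta (q^4) (q^12) = f 4 q"
    using theta_q_q3[OF q4] by (simp add: f_power flip: power_mult)
  ultimately show ?thesis
    unfolding theta_q_q6[OF assms] theta_uminus_q_q6[OF assms] by simp
qed

theorem lemma2p1:
  fixes q :: complex
  assumes "norm q < 1"
  shows "(f 6 q)^8 * f 1 q / ((f 3 q)^4 * (f 2 q)^2)
           + f 2 q * (f 3 q)^2 * (f 12 q)^3 / (f 1 q * f 4 q * f 6 q)
         = 2 * (f 4 q)^2 * (f 12 q)^2 * f 6 q / (f 2 q * f 3 q)"
proof (cases "q = 0")
  case True
  then show ?thesis
    by (simp add: f_at_0)
next
  case False
  have nonzero: "f m q \<noteq> 0" if "m > 0" for m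
    using assms that by (rule f_nonzero)
  let ?K = "f 6 q * f 12 q ^ 2 / (f 2 q * f 3 q)"
  show ?thesis (is "?lhs = ?rhs")
  proof -
    have "?lhs = ?K * (f 1 q * f 6 q ^ 2 / (f 2 q * f 3 q) * (f 6 q ^ 5 / (f 3 q ^ 2 * f 12 q ^ 2))
        + f 2 q ^ 2 * f 3 q * f 12 q / (f 1 q * f 4 q * f 6 q) * (f 3 q ^ 2 / f 6 q))"
      using nonzero by (simp add: field_simps power_numeral_reduce)
    also have "\<dots> = ?K * (2 * f 4 q * f 4 q)"
      unfolding eta_quotient_identity[OF assms False] ..
    also have "\<dots> = ?rhs"
      using nonzero by (simp add: field_simps power_numeral_reduce)
    finally show ?thesis .
  qed
qed

end
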